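(* Let $N\ge 3$ be an integer and $a>0$ real. Let $H=H^{(N)}(a)$ be the real $N\times N$ tridiagonal matrix with $H_{nn}=a+2n-1$, $H_{n,n+1}=-n$, $H_{n+1,n}=-(a+n)$, all other entries zero, and write $D_n(a)=\prod_{j=1}^{n-1}(a+j)$. Then there exists a real symmetric pentadiagonal $N\times N$ matrix $\mathcal P_2=\mathcal P_2^{(N)}(a)$ with $H^\dagger\mathcal P_2=\mathcal P_2H$ whose entries are $(\mathcal P_2)_{11}=(\mathcal P_2)_{12}=0$, $(\mathcal P_2)_{13}=1$, $$(\mathcal P_2)_{nn}=\frac{(n-1)\,(n-1)!\,(a+3n-4)}{D_n(a)}\quad(n=2,\dots,N-1),$$ $$(\mathcal P_2)_{n,n+1}=-\frac{2(n-1)\,n!}{D_n(a)}\quad(n=2,\dots,N-1),\qquad (\mathcal P_2)_{n,n+2}=\frac{(n+1)!}{2D_n(a)}\quad(n=2,\dots,N-2),$$ (the remaining entry $(\mathcal P_2)_{NN}$ being some real number depending on $N$ and $a$). Consequently, with $\Theta_0$ and $\mathcal P_1$ as in the context, for all real $\alpha,\beta$ the pentadiagonal matrix $\Theta_2=\Theta_0+\alpha\mathcal P_1+\beta\mathcal P_2$ satisfies $H^\dagger\Theta_2=\Theta_2H$, and it is a positive definite metric for $H$ whenever $|\alpha|,|\beta|$ are sufficiently small.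
   Context: $H^\dagger$ is the conjugate transpose. A metric for $H$ is a positive definite Hermitian matrix $\Theta$ with $H^\dagger\Theta=\Theta H$. $\Theta_0$ is the diagonal matrix with $(\Theta_0)_{nn}=(n-1)!/D_n(a)$; $\mathcal P_1$ is the real symmetric tridiagonal matrix with $(\mathcal P_1)_{11}=0$, $(\mathcal P_1)_{nn}=-2(n-1)(n-1)!/D_n(a)$ for $n\ge2$, and $(\mathcal P_1)_{n,n+1}=(\mathcal P_1)_{n+1,n}=n!/D_n(a)$; both satisfy $H^\dagger X=XH$. Symmetric entries are understood: $(\mathcal P_2)_{ji}=(\mathcal P_2)_{ij}$. *)

theory Defs
  imports Complex_Main "Jordan_Normal_Form.Matrix"
begin

text \<open>JNF indices are 0-based;
  the paper's 1-based index n corresponds to JNF index n-1.  All definitions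
  below are stated in terms of the paper's 1-based indices n = i+1, m = j+1.\<close>

definition D :: "nat \<Rightarrow> real \<Rightarrow> real" where
  "D n a = (\<Prod>j = 1..n - 1. a + real j)"

definition Hmat :: "nat \<Rightarrow> real \<Rightarrow> real mat" where
  "Hmat N a = mat N N (\<lambda>(i, j). let n = i + 1; m = j + 1 in
     if m = n then a + 2 * real n - 1
     else if m = n + 1 then - real n
     else if n = m + 1 then - (a + real m)
     else 0)"

definition Theta0 :: "nat \<Rightarrow> real \<Rightarrow> real mat" where
  "Theta0 N a = mat N N (\<lambda>(i, j). let n = i + 1 in
     if j = i then fact (n - 1) / D n a else 0)"

definition P1 :: "nat \<Rightarrow> real \<Rightarrow> real mat" where
  "P1 N a = mat N N (\<lambda>(i, j). let n = i + 1; m = j + 1 in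
     if m = n then (if n = 1 then 0 else - 2 * real (n - 1) * fact (n - 1) / D n a)
     else if m = n + 1 then fact n / D n a
     else if n = m + 1 then fact m / D m a
     else 0)"

text \<open>Positive definite Hermitian matrix; for real matrices the conjugate
  transpose is the transpose.\<close>
definition pos_def_hermitian :: "nat \<Rightarrow> real mat \<Rightarrow> bool" where
  "pos_def_hermitian N T \<longleftrightarrow> T \<in> carrier_mat N N \<and> transpose_mat T = T \<and>
     (\<forall>v \<in> carrier_vec N. v \<noteq> 0\<^sub>v N \<longrightarrow> 0 < v \<bullet> (T *\<^sub>v v))"

definition is_metric :: "nat \<Rightarrow> real mat \<Rightarrow> real mat \<Rightarrow> bool" where
  "is_metric N H T \<longleftrightarrow> pos_def_hermitian N T \<and> transpose_mat H * T = T * H"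

end

theory Submission
  imports Defs
begin

text \<open>For a symmetric \<open>\<Theta>\<close> the relation \<open>H\<^sup>T \<Theta> = \<Theta> H\<close> says exactly that
  \<open>\<Theta> H\<close> is symmetric. If \<open>\<Theta>\<close> is pentadiagonal, then \<open>\<Theta> H\<close> has bandwidth three,
  so only its first three super- and subdiagonals have to be compared; with
  \<open>D\<^sub>n\<^sub>+\<^sub>1(a) = (a + n) D\<^sub>n(a)\<close> each comparison is a rational identity in \<open>a\<close>.
  Positive definiteness for small \<open>\<alpha>, \<beta>\<close> holds because \<open>\<Theta>\<^sub>0\<close> is diagonal with
  positive entries: a symmetric perturbation whose entries have absolute sum
  below the smallest diagonal entry cannot destroy positivity of the quadratic form.\<close>

definition mult_Hmat_entry :: "nat \<Rightarrow> real \<Rightarrow> (nat \<Rightarrow> nat \<Rightarrow> real) \<Rightarrow> nat \<Rightarrow> nat \<Rightarrow> real" where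
  "mult_Hmat_entry N a g i j =
     (if 0 < j then g i (j - 1) * (- real j) else 0) + g i j * (a + 2 * real j + 1)
     + (if j + 1 < N then g i (j + 1) * (- (a + real j + 1)) else 0)"

lemma Hmat_carrier: "Hmat N a \<in> carrier_mat N N"
  by (simp add: Hmat_def)

lemma index_mult_Hmat:
  assumes "i < N" "j < N"
  shows "(mat N N (\<lambda>(i, j). g i j) * Hmat N a) $$ (i, j) = mult_Hmat_entry N a g i j"
proof -
  have "(mat N N (\<lambda>(i, j). g i j) * Hmat N a) $$ (i, j) = (\<Sum>k\<in>{0..<N}. g i k * Hmat N a $$ (k, j))"
    using assms by (simp add: Hmat_def scalar_prod_def)
  also have "\<dots> = (\<Sum>k\<in>{0..<N}. (if k = j - 1 \<and> 0 < j then g i k * (- real j) else 0)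
      + (if k = j then g i j * (a + 2 * real j + 1) else 0)
      + (if k = j + 1 then g i k * (- (a + real j + 1)) else 0))"
    using assms by (intro sum.cong) (auto simp: Hmat_def Let_def)
  also have "\<dots> = mult_Hmat_entry N a g i j"
    using assms unfolding mult_Hmat_entry_def sum.distrib by (auto simp: sum.delta')
  finally show ?thesis .
qed

lemma mult_Hmat_entry_0:
  "mult_Hmat_entry N a g i 0 = g i 0 * (a + 1) + (if 1 < N then g i 1 * (- (a + 1)) else 0)"
  by (simp add: mult_Hmat_entry_def)

lemma mult_Hmat_entry_Suc:
  "mult_Hmat_entry N a g i (Suc j) = g i j * (- (real j + 1)) + g i (Suc j) * (a + 2 * real j + 3)
     + (if j + 2 < N then g i (j + 2) * (- (a + real j + 2)) else 0)"
  by (simp add: mult_Hmat_entry_def algebra_simps)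

lemma mult_Hmat_entry_linear:
  "mult_Hmat_entry N a (\<lambda>i j. g i j + \<alpha> * g' i j + \<beta> * g'' i j) i j
     = mult_Hmat_entry N a g i j + \<alpha> * mult_Hmat_entry N a g' i j + \<beta> * mult_Hmat_entry N a g'' i j"
  by (simp add: mult_Hmat_entry_def algebra_simps)

lemma Hmat_intertwines_if_product_symmetric:
  assumes sym: "\<And>i j. g i j = g j i"
    and prod_sym: "\<And>i j. i < N \<Longrightarrow> j < N \<Longrightarrow> mult_Hmat_entry N a g i j = mult_Hmat_entry N a g j i"
  shows "transpose_mat (Hmat N a) * mat N N (\<lambda>(i, j). g i j) = mat N N (\<lambda>(i, j). g i j) * Hmat N a"
proof -
  define M where "M = mat N N (\<lambda>(i, j). g i j)"
  have M: "M \<in> carrier_mat N N" "transpose_mat M = M"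
    unfolding M_def using sym by (auto intro: eq_matI)
  have "transpose_mat (Hmat N a) * M = transpose_mat (M * Hmat N a)"
    using transpose_mult[OF M(1) Hmat_carrier] M(2) by simp
  also have "\<dots> = M * Hmat N a"
  proof (rule eq_matI)
    fix i j assume "i < dim_row (M * Hmat N a)" "j < dim_col (M * Hmat N a)"
    then have ij: "i < N" "j < N" using M(1) Hmat_carrier[of N a] by auto
    have "transpose_mat (M * Hmat N a) $$ (i, j) = mult_Hmat_entry N a g j i"
      using ij M(1) Hmat_carrier[of N a] by (simp add: M_def index_mult_Hmat del: index_mult_mat(1))
    then show "transpose_mat (M * Hmat N a) $$ (i, j) = (M * Hmat N a) $$ (i, j)"
      using ij prod_sym[OF ij] by (simp add: M_def index_mult_Hmat del: index_mult_mat(1))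
  qed (use M(1) Hmat_carrier[of N a] in auto)
  finally show ?thesis unfolding M_def .
qed

lemma mult_Hmat_entry_symmetric_if_banded:
  assumes sym: "\<And>i j. g i j = g j i"
    and band: "\<And>i j. i + 2 < j \<Longrightarrow> g i j = 0"
    and super1: "\<And>i. i + 1 < N \<Longrightarrow> mult_Hmat_entry N a g i (i + 1) = mult_Hmat_entry N a g (i + 1) i"
    and super2: "\<And>i. i + 2 < N \<Longrightarrow> mult_Hmat_entry N a g i (i + 2) = mult_Hmat_entry N a g (i + 2) i"
    and super3: "\<And>i. i + 3 < N \<Longrightarrow> mult_Hmat_entry N a g i (i + 3) = mult_Hmat_entry N a g (i + 3) i"
    and ij: "i < N" "j < N"
  shows "mult_Hmat_entry N a g i j = mult_Hmat_entry N a g j i"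
proof -
  have band': "\<And>i j. j + 2 < i \<Longrightarrow> g i j = 0"
    using band sym by metis
  have upper: "mult_Hmat_entry N a g i j = mult_Hmat_entry N a g j i" if "i \<le> j" "j < N" for i j
  proof -
    consider "j = i" | "j = i + 1" | "j = i + 2" | "j = i + 3" | "i + 4 \<le> j"
      using \<open>i \<le> j\<close> by linarith
    then show ?thesis
    proof cases
      case 5
      then show ?thesis unfolding mult_Hmat_entry_def using band band' by auto
    qed (use that super1 super2 super3 in auto)
  qed
  show ?thesis
    using upper[of i j] upper[of j i] ij by (cases "i \<le> j") auto
qed

lemma D_Suc_Suc: "D (Suc (Suc k)) a = (a + real k + 1) * D (Suc k) a"
  by (simp add: D_def prod.cl_ivl_Suc algebra_simps)

lemma D_1 [simp]: "D (Suc 0) a = 1"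
  by (simp add: D_def)

lemma D_pos: "a > 0 \<Longrightarrow> D n a > 0"
  unfolding D_def by (rule prod_pos) auto

lemma D_nonzero: "a > 0 \<Longrightarrow> D n a \<noteq> 0"
  using D_pos[of a n] by simp

text \<open>The \<open>*_entry\<close> functions take 0-based indices, whereas \<open>p2_diag\<close>,
  \<open>p2_super1\<close>, \<open>p2_super2\<close> are the paper's formulas in the 1-based row index \<open>n\<close>.\<close>

definition theta0_entry :: "real \<Rightarrow> nat \<Rightarrow> nat \<Rightarrow> real" where
  "theta0_entry a i j = (if i = j then fact i / D (i + 1) a else 0)"

definition p1_entry :: "real \<Rightarrow> nat \<Rightarrow> nat \<Rightarrow> real" where
  "p1_entry a i j = (let n = i + 1; m = j + 1 in
     if m = n then (if n = 1 then 0 else - 2 * real (n - 1) * fact (n - 1) / D n a)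
     else if m = n + 1 then fact n / D n a
     else if n = m + 1 then fact m / D m a
     else 0)"

definition p2_diag :: "real \<Rightarrow> nat \<Rightarrow> real" where
  "p2_diag a n = real (n - 1) * fact (n - 1) * (a + 3 * real n - 4) / D n a"

definition p2_super1 :: "real \<Rightarrow> nat \<Rightarrow> real" where
  "p2_super1 a n = - (2 * real (n - 1) * fact n / D n a)"

definition p2_super2 :: "real \<Rightarrow> nat \<Rightarrow> real" where
  "p2_super2 a n = fact (n + 1) / (2 * D n a)"

text \<open>The corner entry is the unique value making the last first-superdiagonal
  entry of \<open>\<P>\<^sub>2 H\<close> symmetric.\<close>

definition p2_entry :: "nat \<Rightarrow> real \<Rightarrow> nat \<Rightarrow> nat \<Rightarrow> real" where
  "p2_entry N a i j =
     (if i = j then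
        (if i = N - 1 then p2_diag a N - (a + real N) * p2_super2 a (N - 1) / (a + real N - 1)
         else p2_diag a (i + 1))
      else if j = i + 1 then p2_super1 a (i + 1) else if i = j + 1 then p2_super1 a (j + 1)
      else if j = i + 2 then p2_super2 a (i + 1) else if i = j + 2 then p2_super2 a (j + 1)
      else 0)"

definition P2mat :: "nat \<Rightarrow> real \<Rightarrow> real mat" where
  "P2mat N a = mat N N (\<lambda>(i, j). p2_entry N a i j)"

lemma Theta0_eq: "Theta0 N a = mat N N (\<lambda>(i, j). theta0_entry a i j)"
  unfolding Theta0_def theta0_entry_def by (intro eq_matI) auto

lemma P1_eq: "P1 N a = mat N N (\<lambda>(i, j). p1_entry a i j)"
  unfolding P1_def p1_entry_def by simp

lemma theta0_entry_sym: "theta0_entry a i j = theta0_entry a j i"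
  by (simp add: theta0_entry_def)

lemma p1_entry_sym: "p1_entry a i j = p1_entry a j i"
  by (auto simp: p1_entry_def Let_def)

lemma p2_entry_sym: "p2_entry N a i j = p2_entry N a j i"
  by (auto simp: p2_entry_def)

lemma theta0_mult_Hmat_sym:
  assumes "a > 0" "i < N" "j < N"
  shows "mult_Hmat_entry N a (theta0_entry a) i j = mult_Hmat_entry N a (theta0_entry a) j i"
proof (rule mult_Hmat_entry_symmetric_if_banded[OF theta0_entry_sym _ _ _ _ assms(2,3)])
  fix i assume "i + 1 < N"
  then show "mult_Hmat_entry N a (theta0_entry a) i (i + 1) = mult_Hmat_entry N a (theta0_entry a) (i + 1) i"
    using assms
    by (cases i) (simp_all add: mult_Hmat_entry_0 mult_Hmat_entry_Suc theta0_entry_def D_Suc_Suc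
        D_nonzero divide_simps, (simp_all add: algebra_simps))
qed (auto simp: theta0_entry_def mult_Hmat_entry_def)

lemma p1_mult_Hmat_sym:
  assumes "a > 0" "i < N" "j < N"
  shows "mult_Hmat_entry N a (p1_entry a) i j = mult_Hmat_entry N a (p1_entry a) j i"
proof (rule mult_Hmat_entry_symmetric_if_banded[OF p1_entry_sym _ _ _ _ assms(2,3)])
  fix i assume "i + 1 < N"
  then show "mult_Hmat_entry N a (p1_entry a) i (i + 1) = mult_Hmat_entry N a (p1_entry a) (i + 1) i"
    using assms
    by (cases i) (simp_all add: mult_Hmat_entry_0 mult_Hmat_entry_Suc p1_entry_def D_Suc_Suc
        D_nonzero divide_simps, (simp_all add: algebra_simps))
next
  fix i assume "i + 2 < N"
  then show "mult_Hmat_entry N a (p1_entry a) i (i + 2) = mult_Hmat_entry N a (p1_entry a) (i + 2) i"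
    using assms unfolding numeral_2_eq_2 add_Suc_right add_0_right
    by (cases i) (simp_all add: mult_Hmat_entry_0 mult_Hmat_entry_Suc p1_entry_def D_Suc_Suc
        D_nonzero divide_simps, (simp_all add: algebra_simps))
qed (auto simp: p1_entry_def mult_Hmat_entry_def Let_def)

lemma p2_mult_Hmat_super3:
  assumes "a > 0" "i + 3 < N"
  shows "mult_Hmat_entry N a (p2_entry N a) i (i + 3) = mult_Hmat_entry N a (p2_entry N a) (i + 3) i"
  using assms unfolding numeral_3_eq_3 add_Suc_right add_0_right
  by (cases i) (simp_all add: mult_Hmat_entry_0 mult_Hmat_entry_Suc p2_entry_def p2_super2_def
      D_Suc_Suc D_nonzero divide_simps, (simp_all add: algebra_simps))

lemma p2_mult_Hmat_super2:
  assumes "a > 0" "i + 2 < N"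
  shows "mult_Hmat_entry N a (p2_entry N a) i (i + 2) = mult_Hmat_entry N a (p2_entry N a) (i + 2) i"
  using assms unfolding numeral_2_eq_2 add_Suc_right add_0_right
  by (cases i) (simp_all add: mult_Hmat_entry_0 mult_Hmat_entry_Suc p2_entry_def p2_super1_def
      p2_super2_def D_Suc_Suc D_nonzero divide_simps, (simp_all add: algebra_simps))

text \<open>The first superdiagonal splits into the generic rows and the last row,
  which involves the corner entry; writing \<open>N\<close> as \<open>i + 3 + m\<close> resp. \<open>i + 2\<close>
  lets the simplifier decide all the index comparisons.\<close>

lemma p2_mult_Hmat_super1_inner:
  assumes "a > 0" "N = i + 3 + m"
  shows "mult_Hmat_entry N a (p2_entry N a) i (i + 1) = mult_Hmat_entry N a (p2_entry N a) (i + 1) i"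
  using assms unfolding numeral_3_eq_3 add_Suc_right add_0_right add_Suc Suc_eq_plus1[symmetric]
  by (cases i) (simp_all add: mult_Hmat_entry_0 mult_Hmat_entry_Suc p2_entry_def p2_diag_def
      p2_super1_def p2_super2_def D_Suc_Suc D_nonzero divide_simps, (simp_all add: algebra_simps))

lemma p2_mult_Hmat_super1_last:
  assumes "a > 0" "N = i + 2"
  shows "mult_Hmat_entry N a (p2_entry N a) i (i + 1) = mult_Hmat_entry N a (p2_entry N a) (i + 1) i"
  using assms unfolding numeral_2_eq_2 add_Suc_right add_0_right add_Suc Suc_eq_plus1[symmetric]
  by (cases i) (simp_all add: mult_Hmat_entry_0 mult_Hmat_entry_Suc p2_entry_def p2_diag_def
      p2_super1_def p2_super2_def D_Suc_Suc D_nonzero divide_simps, (simp_all add: algebra_simps))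

lemma p2_mult_Hmat_sym:
  assumes "a > 0" "i < N" "j < N"
  shows "mult_Hmat_entry N a (p2_entry N a) i j = mult_Hmat_entry N a (p2_entry N a) j i"
proof (rule mult_Hmat_entry_symmetric_if_banded[OF p2_entry_sym _ _
      p2_mult_Hmat_super2[OF assms(1)] p2_mult_Hmat_super3[OF assms(1)] assms(2,3)])
  fix i assume "i + 1 < N"
  then show "mult_Hmat_entry N a (p2_entry N a) i (i + 1) = mult_Hmat_entry N a (p2_entry N a) (i + 1) i"
    using p2_mult_Hmat_super1_inner[OF assms(1), where i = i and m = "N - (i + 3)"]
      p2_mult_Hmat_super1_last[OF assms(1), where i = i] by (cases "N = i + 2") auto
qed (auto simp: p2_entry_def)

lemma P2mat_intertwines: "a > 0 \<Longrightarrow> transpose_mat (Hmat N a) * P2mat N a = P2mat N a * Hmat N a"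
  unfolding P2mat_def
  by (rule Hmat_intertwines_if_product_symmetric[OF p2_entry_sym p2_mult_Hmat_sym])

lemma quadratic_form_mat:
  assumes "v \<in> carrier_vec N"
  shows "v \<bullet> (mat N N (\<lambda>(i, j). h i j) *\<^sub>v v) = (\<Sum>i<N. \<Sum>j<N. v$i * h i j * v$j)"
  using assms by (simp add: scalar_prod_def sum_distrib_left atLeast0LessThan mult.assoc)

lemma abs_mult_le_sum_squares:
  fixes v :: "real vec"
  assumes "i < N" "j < N"
  shows "\<bar>v$i * v$j\<bar> \<le> (\<Sum>k<N. (v$k)\<^sup>2)"
proof -
  have "(v$i)\<^sup>2 \<le> (\<Sum>k<N. (v$k)\<^sup>2)" "(v$j)\<^sup>2 \<le> (\<Sum>k<N. (v$k)\<^sup>2)"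
    using assms by (auto intro: member_le_sum)
  moreover have "2 * \<bar>v$i * v$j\<bar> \<le> (v$i)\<^sup>2 + (v$j)\<^sup>2"
    using sum_squares_bound[of "\<bar>v$i\<bar>" "\<bar>v$j\<bar>"] by (simp add: abs_mult)
  ultimately show ?thesis by linarith
qed

lemma abs_quadratic_form_le:
  fixes v :: "real vec"
  shows "\<bar>\<Sum>i<N. \<Sum>j<N. v$i * g i j * v$j\<bar> \<le> (\<Sum>i<N. \<Sum>j<N. \<bar>g i j\<bar>) * (\<Sum>k<N. (v$k)\<^sup>2)"
proof -
  have "\<bar>\<Sum>i<N. \<Sum>j<N. v$i * g i j * v$j\<bar> \<le> (\<Sum>i<N. \<Sum>j<N. \<bar>v$i * g i j * v$j\<bar>)"
    by (rule order_trans[OF sum_abs sum_mono[OF sum_abs]])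
  also have "\<dots> \<le> (\<Sum>i<N. \<Sum>j<N. \<bar>g i j\<bar> * (\<Sum>k<N. (v$k)\<^sup>2))"
  proof (intro sum_mono)
    fix i j assume "i \<in> {..<N}" "j \<in> {..<N}"
    then have "\<bar>g i j\<bar> * \<bar>v$i * v$j\<bar> \<le> \<bar>g i j\<bar> * (\<Sum>k<N. (v$k)\<^sup>2)"
      by (intro mult_left_mono abs_mult_le_sum_squares) auto
    then show "\<bar>v$i * g i j * v$j\<bar> \<le> \<bar>g i j\<bar> * (\<Sum>k<N. (v$k)\<^sup>2)"
      by (simp add: abs_mult algebra_simps)
  qed
  also have "\<dots> = (\<Sum>i<N. \<Sum>j<N. \<bar>g i j\<bar>) * (\<Sum>k<N. (v$k)\<^sup>2)"
    by (simp add: sum_distrib_right)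
  finally show ?thesis .
qed

lemma diag_dominant_quadratic_form_pos:
  fixes t :: "nat \<Rightarrow> real" and e :: "nat \<Rightarrow> nat \<Rightarrow> real" and v :: "real vec"
  assumes diag: "\<And>i. i < N \<Longrightarrow> c \<le> t i" and small: "(\<Sum>i<N. \<Sum>j<N. \<bar>e i j\<bar>) < c"
    and v: "v \<in> carrier_vec N" "v \<noteq> 0\<^sub>v N"
  shows "0 < (\<Sum>i<N. \<Sum>j<N. v$i * ((if i = j then t i else 0) + e i j) * v$j)"
proof -
  define S where "S = (\<Sum>k<N. (v$k)\<^sup>2)"
  obtain i0 where i0: "i0 < N" "v$i0 \<noteq> 0"
    using v by (metis carrier_vecD eq_vecI index_zero_vec(1,2))
  have "0 < (v$i0)\<^sup>2" "(v$i0)\<^sup>2 \<le> S"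
    unfolding S_def using i0 by (auto intro: member_le_sum)
  then have S_pos: "0 < S" by linarith
  have diag_part: "(\<Sum>i<N. \<Sum>j<N. v$i * (if i = j then t i else 0) * v$j) = (\<Sum>i<N. t i * (v$i)\<^sup>2)"
    by (simp add: if_distrib if_distribR sum.delta power2_eq_square mult_ac cong: if_cong)
  have "c * S \<le> (\<Sum>i<N. t i * (v$i)\<^sup>2)"
    unfolding S_def sum_distrib_left by (intro sum_mono mult_right_mono diag) auto
  moreover have "\<bar>\<Sum>i<N. \<Sum>j<N. v$i * e i j * v$j\<bar> < c * S"
    using abs_quadratic_form_le[where v = v and g = e and N = N] small S_pos unfolding S_def
    by (meson mult_strict_right_mono order_le_less_trans)
  moreover have "(\<Sum>i<N. \<Sum>j<N. v$i * ((if i = j then t i else 0) + e i j) * v$j) =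
      (\<Sum>i<N. \<Sum>j<N. v$i * (if i = j then t i else 0) * v$j) + (\<Sum>i<N. \<Sum>j<N. v$i * e i j * v$j)"
    by (simp add: sum.distrib algebra_simps)
  ultimately show ?thesis
    using diag_part by linarith
qed

lemma small_perturbation_quadratic_form_pos:
  fixes t :: "nat \<Rightarrow> real" and g h :: "nat \<Rightarrow> nat \<Rightarrow> real"
  assumes "N > 0" and t_pos: "\<And>i. i < N \<Longrightarrow> t i > 0"
  shows "\<exists>\<epsilon>>0. \<forall>\<alpha> \<beta>. \<bar>\<alpha>\<bar> < \<epsilon> \<and> \<bar>\<beta>\<bar> < \<epsilon> \<longrightarrow> (\<forall>v\<in>carrier_vec N. v \<noteq> 0\<^sub>v N \<longrightarrow>
     0 < (\<Sum>i<N. \<Sum>j<N. v$i * ((if i = j then t i else 0) + \<alpha> * g i j + \<beta> * h i j) * v$j))"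
proof -
  define c where "c = Min (t ` {..<N})"
  have c_pos: "c > 0"
    unfolding c_def using assms by (subst Min_gr_iff) auto
  have c_le: "c \<le> t i" if "i < N" for i
    unfolding c_def using that by (intro Min_le) auto
  define K1 where "K1 = (\<Sum>i<N. \<Sum>j<N. \<bar>g i j\<bar>)"
  define K2 where "K2 = (\<Sum>i<N. \<Sum>j<N. \<bar>h i j\<bar>)"
  have K_nonneg: "K1 \<ge> 0" "K2 \<ge> 0"
    unfolding K1_def K2_def by (auto intro: sum_nonneg)
  define \<epsilon> where "\<epsilon> = c / (K1 + K2 + 1)"
  have \<epsilon>_pos: "\<epsilon> > 0"
    unfolding \<epsilon>_def using c_pos K_nonneg by auto
  have \<epsilon>_K: "\<epsilon> * (K1 + K2) < c"
    using c_pos K_nonneg unfolding \<epsilon>_def by (simp add: field_simps)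
  show ?thesis
  proof (intro exI[of _ \<epsilon>] conjI \<epsilon>_pos allI impI ballI)
    fix \<alpha> \<beta> :: real and v :: "real vec"
    assume small: "\<bar>\<alpha>\<bar> < \<epsilon> \<and> \<bar>\<beta>\<bar> < \<epsilon>" and v: "v \<in> carrier_vec N" "v \<noteq> 0\<^sub>v N"
    have "(\<Sum>i<N. \<Sum>j<N. \<bar>\<alpha> * g i j + \<beta> * h i j\<bar>) \<le> \<bar>\<alpha>\<bar> * K1 + \<bar>\<beta>\<bar> * K2"
      unfolding K1_def K2_def sum_distrib_left sum.distrib[symmetric]
      by (intro sum_mono) (simp add: abs_mult[symmetric] abs_triangle_ineq)
    also have "\<dots> \<le> \<epsilon> * (K1 + K2)"
      using small K_nonneg by (simp add: distrib_left add_mono mult_right_mono)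
    finally have "(\<Sum>i<N. \<Sum>j<N. \<bar>\<alpha> * g i j + \<beta> * h i j\<bar>) < c"
      using \<epsilon>_K by linarith
    from diag_dominant_quadratic_form_pos[OF c_le this v]
    show "0 < (\<Sum>i<N. \<Sum>j<N. v$i * ((if i = j then t i else 0) + \<alpha> * g i j + \<beta> * h i j) * v$j)"
      by (simp add: add.assoc)
  qed
qed

lemma Theta0_P1_P2mat_combination:
  "Theta0 N a + \<alpha> \<cdot>\<^sub>m P1 N a + \<beta> \<cdot>\<^sub>m P2mat N a =
     mat N N (\<lambda>(i, j). theta0_entry a i j + \<alpha> * p1_entry a i j + \<beta> * p2_entry N a i j)"
  unfolding P2mat_def Theta0_eq P1_eq by (intro eq_matI) auto

lemma Theta0_P1_P2mat_combination_intertwines: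
  assumes "a > 0"
  shows "transpose_mat (Hmat N a) * (Theta0 N a + \<alpha> \<cdot>\<^sub>m P1 N a + \<beta> \<cdot>\<^sub>m P2mat N a)
    = (Theta0 N a + \<alpha> \<cdot>\<^sub>m P1 N a + \<beta> \<cdot>\<^sub>m P2mat N a) * Hmat N a"
  unfolding Theta0_P1_P2mat_combination
  using theta0_entry_sym p1_entry_sym p2_entry_sym
    theta0_mult_Hmat_sym[OF assms] p1_mult_Hmat_sym[OF assms] p2_mult_Hmat_sym[OF assms]
  by (intro Hmat_intertwines_if_product_symmetric) (simp_all add: mult_Hmat_entry_linear)

lemma Theta0_P1_P2mat_small_combination_is_metric:
  assumes "a > 0" "N > 0"
  shows "\<exists>\<epsilon> > 0. \<forall>\<alpha> \<beta> :: real. \<bar>\<alpha>\<bar> < \<epsilon> \<and> \<bar>\<beta>\<bar> < \<epsilon> \<longrightarrow>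
     is_metric N (Hmat N a) (Theta0 N a + \<alpha> \<cdot>\<^sub>m P1 N a + \<beta> \<cdot>\<^sub>m P2mat N a)"
proof -
  have "fact i / D (i + 1) a > 0" for i
    using D_pos[OF assms(1)] by simp
  then obtain \<epsilon> where "\<epsilon> > 0" and pos: "\<forall>\<alpha> \<beta>. \<bar>\<alpha>\<bar> < \<epsilon> \<and> \<bar>\<beta>\<bar> < \<epsilon> \<longrightarrow>
      (\<forall>v\<in>carrier_vec N. v \<noteq> 0\<^sub>v N \<longrightarrow>
        0 < (\<Sum>i<N. \<Sum>j<N. v$i * (theta0_entry a i j + \<alpha> * p1_entry a i j + \<beta> * p2_entry N a i j) * v$j))"
    using small_perturbation_quadratic_form_pos[OF assms(2), of "\<lambda>i. fact i / D (i + 1) a"]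
    unfolding theta0_entry_def by blast
  show ?thesis
    unfolding is_metric_def pos_def_hermitian_def
  proof (intro exI[of _ \<epsilon>] conjI \<open>\<epsilon> > 0\<close> allI impI ballI Theta0_P1_P2mat_combination_intertwines[OF assms(1)])
    show "Theta0 N a + \<alpha> \<cdot>\<^sub>m P1 N a + \<beta> \<cdot>\<^sub>m P2mat N a \<in> carrier_mat N N" for \<alpha> \<beta>
      unfolding Theta0_P1_P2mat_combination by simp
    show "transpose_mat (Theta0 N a + \<alpha> \<cdot>\<^sub>m P1 N a + \<beta> \<cdot>\<^sub>m P2mat N a) = Theta0 N a + \<alpha> \<cdot>\<^sub>m P1 N a + \<beta> \<cdot>\<^sub>m P2mat N a"
      for \<alpha> \<beta>
      unfolding Theta0_P1_P2mat_combination
      using theta0_entry_sym p1_entry_sym p2_entry_sym by (intro eq_matI) auto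
    show "0 < v \<bullet> ((Theta0 N a + \<alpha> \<cdot>\<^sub>m P1 N a + \<beta> \<cdot>\<^sub>m P2mat N a) *\<^sub>v v)"
      if "\<bar>\<alpha>\<bar> < \<epsilon> \<and> \<bar>\<beta>\<bar> < \<epsilon>" "v \<in> carrier_vec N" "v \<noteq> 0\<^sub>v N" for \<alpha> \<beta> v
      unfolding Theta0_P1_P2mat_combination quadratic_form_mat[OF that(2)] using pos that by blast
  qed
qed

theorem lemma3:
  fixes N :: nat and a :: real
  assumes "N \<ge> 3" and "a > 0"
  shows "\<exists>P2 :: real mat.
     P2 \<in> carrier_mat N N \<and>
     transpose_mat P2 = P2 \<and>
     (\<forall>i < N. \<forall>j < N. (i + 2 < j \<or> j + 2 < i) \<longrightarrow> P2 $$ (i, j) = 0) \<and>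
     transpose_mat (Hmat N a) * P2 = P2 * Hmat N a \<and>
     P2 $$ (0, 0) = 0 \<and> P2 $$ (0, 1) = 0 \<and> P2 $$ (0, 2) = 1 \<and>
     (\<forall>n \<in> {2..N - 1}. P2 $$ (n - 1, n - 1) =
        real (n - 1) * fact (n - 1) * (a + 3 * real n - 4) / D n a) \<and>
     (\<forall>n \<in> {2..N - 1}. P2 $$ (n - 1, n) = - (2 * real (n - 1) * fact n / D n a)) \<and>
     (\<forall>n \<in> {2..N - 2}. P2 $$ (n - 1, n + 1) = fact (n + 1) / (2 * D n a)) \<and>
     (\<forall>\<alpha> \<beta> :: real.
        transpose_mat (Hmat N a) * (Theta0 N a + \<alpha> \<cdot>\<^sub>m P1 N a + \<beta> \<cdot>\<^sub>m P2)
        = (Theta0 N a + \<alpha> \<cdot>\<^sub>m P1 N a + \<beta> \<cdot>\<^sub>m P2) * Hmat N a) \<and>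
     (\<exists>\<epsilon> > 0. \<forall>\<alpha> \<beta> :: real. \<bar>\<alpha>\<bar> < \<epsilon> \<and> \<bar>\<beta>\<bar> < \<epsilon> \<longrightarrow>
        is_metric N (Hmat N a) (Theta0 N a + \<alpha> \<cdot>\<^sub>m P1 N a + \<beta> \<cdot>\<^sub>m P2))"
proof (intro exI[of _ "P2mat N a"] conjI ballI P2mat_intertwines Theta0_P1_P2mat_small_combination_is_metric)
  show "P2mat N a \<in> carrier_mat N N" "transpose_mat (P2mat N a) = P2mat N a"
    unfolding P2mat_def using p2_entry_sym by (auto intro: eq_matI)
  show "\<forall>i < N. \<forall>j < N. (i + 2 < j \<or> j + 2 < i) \<longrightarrow> P2mat N a $$ (i, j) = 0"
    by (auto simp: P2mat_def p2_entry_def)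
  show "P2mat N a $$ (0, 0) = 0" "P2mat N a $$ (0, 1) = 0" "P2mat N a $$ (0, 2) = 1"
    using assms by (auto simp: P2mat_def p2_entry_def p2_diag_def p2_super1_def p2_super2_def)
  show "P2mat N a $$ (n - 1, n - 1) = real (n - 1) * fact (n - 1) * (a + 3 * real n - 4) / D n a"
    "P2mat N a $$ (n - 1, n) = - (2 * real (n - 1) * fact n / D n a)" if "n \<in> {2..N - 1}" for n
    using that assms by (auto simp: P2mat_def p2_entry_def p2_diag_def p2_super1_def)
  show "P2mat N a $$ (n - 1, n + 1) = fact (n + 1) / (2 * D n a)" if "n \<in> {2..N - 2}" for n
    using that assms by (auto simp: P2mat_def p2_entry_def p2_super2_def)
  show "\<forall>\<alpha> \<beta>. transpose_mat (Hmat N a) * (Theta0 N a + \<alpha> \<cdot>\<^sub>m P1 N a + \<beta> \<cdot>\<^sub>m P2mat N a)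
      = (Theta0 N a + \<alpha> \<cdot>\<^sub>m P1 N a + \<beta> \<cdot>\<^sub>m P2mat N a) * Hmat N a"
    using Theta0_P1_P2mat_combination_intertwines[OF assms(2)] by blast
qed (use assms in auto)

end
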